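(* Let $\mathcal{K}$ be a continuous unitary representation of $\overline{\mathfrak{S}}_\infty$ in a Hilbert space $\mathcal{H}$, let $n,k\ge 1$ be integers, let $P_n$ be the weak-operator limit of $\mathcal{K}({}^n\sigma_m)$ as $m\to\infty$, and let $O_k$ be the weak-operator limit of $\mathcal{K}((k\;\;N))$ as $N\to\infty$. Let $\mathfrak{S}(k,n,\infty)$ be the subgroup of $\overline{\mathfrak{S}}_\infty$ generated by the transposition $(k\;\;n+1)$ and the subgroup $\mathfrak{S}(n,\infty)$. Then $O_kP_n$ is the self-adjoint (orthogonal) projection onto the subspace $\{\eta\in\mathcal{H}: \mathcal{K}(s)\eta=\eta \text{ for all } s\in\mathfrak{S}(k,n,\infty)\}$. In particular, $O_nP_n=P_{n-1}$.
   Context: $\overline{\mathfrak{S}}_\infty$ is the group of all bijections of $\mathbb{N}$, with the Polish topology in which the subgroups $\mathfrak{S}(n,\infty)=\{s: s(j)=j \text{ for } j=1,\dots,n\}$ form a fundamental system of neighborhoods of the identity; continuity of $\mathcal{K}$ means $\lim_{n\to\infty}\sup_{s\in\mathfrak{S}(n,\infty)}\|\mathcal{K}(s)\eta-\eta\|=0$ for each $\eta\in\mathcal{H}$. $(k\;j)$ denotes the transposition of $k$ and $j$, and ${}^n\sigma_m=(n+1\;\;n+m+1)(n+2\;\;n+m+2)\cdots(n+m\;\;n+2m)$. The weak-operator limits $P_n$ and $O_k$ exist and are self-adjoint projections; $P_{n-1}$ is defined analogously with $n-1$ in place of $n$. *)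

theory Defs
  imports "HOL-Analysis.Analysis" "HOL-Combinatorics.Transposition"
begin

text \<open>Bijections of the positive integers {1,2,...}, realised as bijections of nat fixing 0.\<close>
definition Sinf :: "(nat \<Rightarrow> nat) set" where
  "Sinf = {s. bij s \<and> s 0 = 0}"

definition Sfix :: "nat \<Rightarrow> (nat \<Rightarrow> nat) set" where
  "Sfix n = {s \<in> Sinf. \<forall>j\<in>{1..n}. s j = j}"

definition sigma :: "nat \<Rightarrow> nat \<Rightarrow> nat \<Rightarrow> nat" where
  "sigma n m = foldr (\<circ>) (map (\<lambda>i. Transposition.transpose (n + i) (n + m + i)) [1..<m+1]) id"

inductive_set gen_subgroup :: "(nat \<Rightarrow> nat) set \<Rightarrow> (nat \<Rightarrow> nat) set" for A where
  gen_id: "id \<in> gen_subgroup A"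
| gen_base: "s \<in> A \<Longrightarrow> s \<in> gen_subgroup A"
| gen_comp: "s \<in> gen_subgroup A \<Longrightarrow> t \<in> gen_subgroup A \<Longrightarrow> s \<circ> t \<in> gen_subgroup A"
| gen_inv: "s \<in> gen_subgroup A \<Longrightarrow> inv s \<in> gen_subgroup A"

definition Sfix2 :: "nat \<Rightarrow> nat \<Rightarrow> (nat \<Rightarrow> nat) set" where
  "Sfix2 k n = gen_subgroup (insert (Transposition.transpose k (n + 1)) (Sfix n))"

definition unitary_rep :: "((nat \<Rightarrow> nat) \<Rightarrow> 'a::{real_inner,complete_space} \<Rightarrow> 'a) \<Rightarrow> bool" where
  "unitary_rep K \<longleftrightarrow>
     K id = id \<and>
     (\<forall>s\<in>Sinf. \<forall>t\<in>Sinf. K (s \<circ> t) = K s \<circ> K t) \<and>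
     (\<forall>s\<in>Sinf. bounded_linear (K s) \<and> surj (K s) \<and> (\<forall>x. norm (K s x) = norm x))"

text \<open>Continuity in the Polish topology of Sinf.\<close>
definition continuous_rep :: "((nat \<Rightarrow> nat) \<Rightarrow> 'a::real_normed_vector \<Rightarrow> 'a) \<Rightarrow> bool" where
  "continuous_rep K \<longleftrightarrow>
     (\<forall>\<eta>. (\<lambda>n. SUP s\<in>Sfix n. norm (K s \<eta> - \<eta>)) \<longlonglongrightarrow> 0)"

definition weak_op_limit :: "(nat \<Rightarrow> 'a::real_inner \<Rightarrow> 'a) \<Rightarrow> ('a \<Rightarrow> 'a) \<Rightarrow> bool" where
  "weak_op_limit A B \<longleftrightarrow> (\<forall>\<eta> \<xi>. (\<lambda>m. inner (A m \<eta>) \<xi>) \<longlonglongrightarrow> inner (B \<eta>) \<xi>)"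

definition sa_projection_onto :: "('a::real_inner \<Rightarrow> 'a) \<Rightarrow> 'a set \<Rightarrow> bool" where
  "sa_projection_onto Q V \<longleftrightarrow>
     bounded_linear Q \<and> Q \<circ> Q = Q \<and> (\<forall>x y. inner (Q x) y = inner x (Q y)) \<and> range Q = V"

end

theory Submission
  imports Defs
begin

(* P_n is the weak limit of the unitary involutions K(^n\<sigma>_m), hence a self-adjoint contraction
   fixing every S(n,\<infinity>)-invariant vector.  Its range is S(n,\<infinity>)-invariant: ^n\<sigma>_m conjugates a
   transposition (i j) with i, j > n into (i+m j+m) \<in> S(m,\<infinity>), which acts almost trivially for
   large m by continuity; and by continuity again, invariance under these transpositions gives
   invariance under all of S(n,\<infinity>).  So P_n is the orthogonal projection onto the
   S(n,\<infinity>)-invariant vectors.  The same argument with (k N), N \<rightarrow> \<infinity>, shows that O_k fixes the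
   vectors invariant under the stabiliser G of {1..n} - {k} and maps S(n,\<infinity>)-invariant vectors
   into G-invariant ones, so O_k P_n is the projection onto the G-invariant vectors.  Finally
   G = S(k,n,\<infinity>), and G = S(n-1,\<infinity>) when k = n. *)

section \<open>Permutations\<close>

lemma foldr_comp_snoc: "foldr (\<circ>) (fs @ [f]) id = foldr (\<circ>) fs id \<circ> f"
  by (induction fs) auto

lemma sigma_prefix_apply:
  assumes "j \<le> m"
  shows "foldr (\<circ>) (map (\<lambda>i. Transposition.transpose (n + i) (n + m + i)) [1..<j+1]) id x =
    (if n < x \<and> x \<le> n + j then x + m else if n + m < x \<and> x \<le> n + m + j then x - m else x)"
  using assms
proof (induction j arbitrary: x)
  case (Suc j)
  let ?\<tau> = "\<lambda>i. Transposition.transpose (n + i) (n + m + i)"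
  have "[1..<Suc j + 1] = [1..<j+1] @ [j+1]"
    by simp
  then have "foldr (\<circ>) (map ?\<tau> [1..<Suc j + 1]) id x = foldr (\<circ>) (map ?\<tau> [1..<j+1]) id (?\<tau> (j + 1) x)"
    by (simp only: map_append list.map foldr_comp_snoc comp_apply)
  also have "\<dots> = (if n < ?\<tau> (j + 1) x \<and> ?\<tau> (j + 1) x \<le> n + j then ?\<tau> (j + 1) x + m
      else if n + m < ?\<tau> (j + 1) x \<and> ?\<tau> (j + 1) x \<le> n + m + j then ?\<tau> (j + 1) x - m
      else ?\<tau> (j + 1) x)"
    using Suc.prems by (intro Suc.IH) simp
  also have "\<dots> = (if n < x \<and> x \<le> n + Suc j then x + m
      else if n + m < x \<and> x \<le> n + m + Suc j then x - m else x)"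
    using Suc.prems by (auto simp: Transposition.transpose_def)
  finally show ?case .
qed simp

lemma sigma_apply:
  "sigma n m x = (if n < x \<and> x \<le> n + m then x + m else if n + m < x \<and> x \<le> n + m + m then x - m else x)"
  unfolding sigma_def by (rule sigma_prefix_apply) simp

lemma sigma_involution: "sigma n m \<circ> sigma n m = id"
  by (rule ext) (auto simp: sigma_apply split: if_splits)

lemma bij_sigma: "bij (sigma n m)"
  using o_bij[OF sigma_involution sigma_involution] .

lemma inv_sigma: "inv (sigma n m) = sigma n m"
  by (rule inv_unique_comp) (simp_all add: sigma_involution)

lemma transpose_comp_sigma:
  assumes "n < i" "i \<le> m" "n < j" "j \<le> m"
  shows "Transposition.transpose i j \<circ> sigma n m = sigma n m \<circ> Transposition.transpose (i + m) (j + m)"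
  using assms by (simp add: transpose_comp_eq[OF bij_sigma] inv_sigma sigma_apply)

lemma transpose_comp_transpose:
  "Transposition.transpose i j \<circ> Transposition.transpose a b =
    Transposition.transpose a b \<circ>
      Transposition.transpose (Transposition.transpose a b i) (Transposition.transpose a b j)"
  using transpose_comp_eq[OF bij_transpose, of i j a b] by simp

lemma transpose_comp_agree:
  assumes "inj f" and "inj s" and "\<forall>j\<in>A. f j = s j"
  shows "\<forall>j\<in>insert x A. (Transposition.transpose (f x) (s x) \<circ> f) j = s j"
proof
  fix j
  assume "j \<in> insert x A"
  then consider "j = x" | "j \<in> A" and "j \<noteq> x"
    by blast
  then show "(Transposition.transpose (f x) (s x) \<circ> f) j = s j"
  proof cases
    case 2
    then have "f j = s j" and "f j \<noteq> f x" and "s j \<noteq> s x"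
      using assms by (auto simp: inj_eq)
    then show ?thesis
      by simp
  qed simp
qed

(* Sinf fixes the dummy point 0, so stabilisers are taken of sets containing 0:
   S(n,\<infinity>) is stabilizer {0..n}, and {1..n} - {k} becomes {0..n} - {k}. *)
definition stabilizer :: "nat set \<Rightarrow> (nat \<Rightarrow> nat) set" where
  "stabilizer F = {s \<in> Sinf. \<forall>j\<in>F. s j = j}"

lemma stabilizer_subset_Sinf: "stabilizer F \<subseteq> Sinf"
  by (auto simp: stabilizer_def)

lemma stabilizer_antimono: "F \<subseteq> G \<Longrightarrow> stabilizer G \<subseteq> stabilizer F"
  by (auto simp: stabilizer_def)

lemma id_in_stabilizer: "id \<in> stabilizer F"
  by (simp add: stabilizer_def Sinf_def)

lemma stabilizer_comp: "s \<in> stabilizer F \<Longrightarrow> t \<in> stabilizer F \<Longrightarrow> s \<circ> t \<in> stabilizer F"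
  by (auto simp: stabilizer_def Sinf_def bij_comp)

lemma stabilizer_inv: "s \<in> stabilizer F \<Longrightarrow> inv s \<in> stabilizer F"
  by (auto simp: stabilizer_def Sinf_def bij_imp_bij_inv bij_is_inj inv_f_eq)

lemma stabilizer_preserves_complement:
  assumes "s \<in> stabilizer F" and "x \<notin> F"
  shows "s x \<notin> F"
proof
  assume "s x \<in> F"
  then have "s (s x) = s x"
    using assms(1) by (simp add: stabilizer_def)
  then have "s x = x"
    using assms(1) by (simp add: stabilizer_def Sinf_def bij_is_inj inj_eq)
  with \<open>s x \<in> F\<close> assms(2) show False
    by simp
qed

lemma transpose_in_stabilizer:
  "0 \<in> F \<Longrightarrow> a \<notin> F \<Longrightarrow> b \<notin> F \<Longrightarrow> Transposition.transpose a b \<in> stabilizer F"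
  unfolding stabilizer_def Sinf_def by (auto simp: Transposition.transpose_def) (metis neq0_conv)

lemma transpose_in_Sinf: "a \<noteq> 0 \<Longrightarrow> b \<noteq> 0 \<Longrightarrow> Transposition.transpose a b \<in> Sinf"
  using transpose_in_stabilizer[of "{0}" a b] stabilizer_subset_Sinf by auto

lemma stabilizer_apply_cases:
  assumes "f \<in> stabilizer F" and "s \<in> stabilizer F"
  shows "f x = s x \<or> f x \<notin> F \<and> s x \<notin> F"
proof (cases "x \<in> F")
  case True
  with assms show ?thesis
    by (simp add: stabilizer_def)
qed (simp add: assms stabilizer_preserves_complement)

lemma Sfix_eq_stabilizer: "Sfix n = stabilizer {0..n}"
  unfolding Sfix_def stabilizer_def Sinf_def
  by (auto, metis atLeastAtMost_iff not_gr0 Suc_leI)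

lemma sigma_in_stabilizer: "sigma n m \<in> stabilizer {0..n}"
  using bij_sigma by (auto simp: stabilizer_def Sinf_def sigma_apply)

lemma sigma_in_Sinf: "sigma n m \<in> Sinf"
  using sigma_in_stabilizer stabilizer_subset_Sinf by blast

lemma eventually_transpose_in_Sinf:
  "k \<noteq> 0 \<Longrightarrow> \<forall>\<^sub>F N in sequentially. Transposition.transpose k N \<in> Sinf"
  using eventually_gt_at_top[of 0] by (rule eventually_mono) (simp add: transpose_in_Sinf)

lemma Sfix2_subset_stabilizer:
  assumes "k \<ge> 1"
  shows "Sfix2 k n \<subseteq> stabilizer ({0..n} - {k})"
proof
  fix s
  assume "s \<in> Sfix2 k n"
  then show "s \<in> stabilizer ({0..n} - {k})"
    unfolding Sfix2_def
  proof (induction rule: gen_subgroup.induct)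
    case gen_id
    then show ?case
      using id_in_stabilizer by (simp add: id_def)
  next
    case (gen_base s)
    have "Sfix n \<subseteq> stabilizer ({0..n} - {k})"
      unfolding Sfix_eq_stabilizer by (rule stabilizer_antimono) auto
    with gen_base assms show ?case
      by (auto intro: transpose_in_stabilizer)
  next
    case (gen_comp s t)
    then show ?case
      using stabilizer_comp by (simp add: comp_def)
  next
    case (gen_inv s)
    then show ?case
      using stabilizer_inv by blast
  qed
qed

lemma transpose_in_Sfix2:
  assumes "k \<le> n" and "n < j"
  shows "Transposition.transpose k j \<in> Sfix2 k n"
proof (cases "j = n + 1")
  case False
  have "Transposition.transpose (n + 1) j \<in> Sfix n"
    using assms by (auto simp: Sfix_eq_stabilizer intro: transpose_in_stabilizer)
  then have "Transposition.transpose (n + 1) j \<in> Sfix2 k n"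
    and "Transposition.transpose k (n + 1) \<in> Sfix2 k n"
    by (simp_all add: Sfix2_def gen_base)
  moreover have "Transposition.transpose k j =
    Transposition.transpose (n + 1) j \<circ> Transposition.transpose k (n + 1) \<circ> Transposition.transpose (n + 1) j"
    using False assms by (auto simp: fun_eq_iff Transposition.transpose_def)
  ultimately show ?thesis
    unfolding Sfix2_def by (simp only: gen_comp)
qed (simp add: Sfix2_def gen_base)

lemma stabilizer_subset_Sfix2:
  assumes "k \<ge> 1"
  shows "stabilizer ({0..n} - {k}) \<subseteq> Sfix2 k n"
proof
  fix s
  assume s: "s \<in> stabilizer ({0..n} - {k})"
  show "s \<in> Sfix2 k n"
  proof (cases "k \<le> n \<and> s k \<noteq> k")
    case True
    \<comment> \<open>then s k > n, and composing with (k s k) moves s into S(n,\<infinity>)\<close>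
    define c where "c = Transposition.transpose k (s k)"
    have "s k \<notin> {0..n} - {k}"
      using stabilizer_preserves_complement[OF s, of k] by simp
    with True have "n < s k"
      by auto
    then have c: "c \<in> Sfix2 k n"
      using True by (simp add: c_def transpose_in_Sfix2)
    have "c \<in> stabilizer ({0..n} - {k})"
      using \<open>n < s k\<close> assms by (auto simp: c_def intro: transpose_in_stabilizer)
    then have "c \<circ> s \<in> stabilizer ({0..n} - {k})"
      using s by (rule stabilizer_comp)
    then have "c \<circ> s \<in> Sfix n"
      by (auto simp: Sfix_eq_stabilizer stabilizer_def c_def)
    then have "c \<circ> (c \<circ> s) \<in> Sfix2 k n"
      using c unfolding Sfix2_def by (blast intro: gen_base gen_comp)
    then show ?thesis
      by (simp add: c_def flip: comp_assoc)
  next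
    case False
    then have "s \<in> stabilizer {0..n}"
      using s by (auto simp: stabilizer_def)
    then show ?thesis
      by (simp add: Sfix2_def Sfix_eq_stabilizer gen_base)
  qed
qed

lemma Sfix2_eq_stabilizer: "k \<ge> 1 \<Longrightarrow> Sfix2 k n = stabilizer ({0..n} - {k})"
  using Sfix2_subset_stabilizer stabilizer_subset_Sfix2 by blast


section \<open>Weak limits of a unitary representation\<close>

definition fixed_vectors :: "((nat \<Rightarrow> nat) \<Rightarrow> 'a \<Rightarrow> 'a) \<Rightarrow> (nat \<Rightarrow> nat) set \<Rightarrow> 'a set" where
  "fixed_vectors K G = {\<eta>. \<forall>s\<in>G. K s \<eta> = \<eta>}"

lemma fixed_vectors_antimono: "G \<subseteq> H \<Longrightarrow> fixed_vectors K H \<subseteq> fixed_vectors K G"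
  by (auto simp: fixed_vectors_def)

lemma weak_op_limit_eqI:
  assumes "weak_op_limit A B" and "\<And>\<xi>. (\<lambda>m. inner (A m x) \<xi>) \<longlonglongrightarrow> inner b \<xi>"
  shows "B x = b"
proof -
  have "inner (B x) \<xi> = inner b \<xi>" for \<xi>
    using assms by (auto simp: weak_op_limit_def intro: LIMSEQ_unique)
  then show ?thesis
    using vector_eq_rdot by blast
qed

locale unitary_representation =
  fixes K :: "(nat \<Rightarrow> nat) \<Rightarrow> 'a::{real_inner,complete_space} \<Rightarrow> 'a"
  assumes unitary: "unitary_rep K"
begin

lemma rep_id [simp]: "K id x = x"
  using unitary by (simp add: unitary_rep_def)

lemma rep_comp: "s \<in> Sinf \<Longrightarrow> t \<in> Sinf \<Longrightarrow> K (s \<circ> t) x = K s (K t x)"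
  using unitary by (simp add: unitary_rep_def)

lemma rep_linear: "s \<in> Sinf \<Longrightarrow> linear (K s)"
  using unitary by (simp add: unitary_rep_def bounded_linear.linear)

lemma norm_rep [simp]: "s \<in> Sinf \<Longrightarrow> norm (K s x) = norm x"
  using unitary by (simp add: unitary_rep_def)

lemma inner_rep: "s \<in> Sinf \<Longrightarrow> inner (K s x) (K s y) = inner x y"
  by (simp add: dot_norm[of "K s x"] dot_norm[of x] linear_add[OF rep_linear, symmetric])

lemma inner_rep_involution:
  assumes "s \<in> Sinf" and "s \<circ> s = id"
  shows "inner (K s x) y = inner x (K s y)"
proof -
  have "inner (K s x) y = inner (K s x) (K s (K s y))"
    using assms rep_comp[of s s y] by simp
  also have "\<dots> = inner x (K s y)"
    using assms(1) by (rule inner_rep)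
  finally show ?thesis .
qed

context
  fixes s :: "nat \<Rightarrow> nat \<Rightarrow> nat" and B :: "'a \<Rightarrow> 'a"
  assumes weak_limit: "weak_op_limit (\<lambda>m. K (s m)) B"
    and eventually_Sinf: "\<forall>\<^sub>F m in sequentially. s m \<in> Sinf"
begin

lemma weak_limit_tendsto: "(\<lambda>m. inner (K (s m) x) \<xi>) \<longlonglongrightarrow> inner (B x) \<xi>"
  using weak_limit by (simp add: weak_op_limit_def)

lemma weak_limit_linear: "linear B"
proof
  fix x y :: 'a and r :: real
  show "B (x + y) = B x + B y"
  proof (rule weak_op_limit_eqI[OF weak_limit])
    fix \<xi>
    have "(\<lambda>m. inner (K (s m) x) \<xi> + inner (K (s m) y) \<xi>) \<longlonglongrightarrow> inner (B x + B y) \<xi>"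
      unfolding inner_add_left by (intro tendsto_add weak_limit_tendsto)
    moreover have "\<forall>\<^sub>F m in sequentially.
        inner (K (s m) x) \<xi> + inner (K (s m) y) \<xi> = inner (K (s m) (x + y)) \<xi>"
      using eventually_Sinf by eventually_elim (simp add: linear_add[OF rep_linear] inner_add_left)
    ultimately show "(\<lambda>m. inner (K (s m) (x + y)) \<xi>) \<longlonglongrightarrow> inner (B x + B y) \<xi>"
      by (rule Lim_transform_eventually)
  qed
  show "B (r *\<^sub>R x) = r *\<^sub>R B x"
  proof (rule weak_op_limit_eqI[OF weak_limit])
    fix \<xi>
    have "(\<lambda>m. r * inner (K (s m) x) \<xi>) \<longlonglongrightarrow> inner (r *\<^sub>R B x) \<xi>"
      by (simp add: tendsto_mult_left weak_limit_tendsto)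
    moreover have "\<forall>\<^sub>F m in sequentially. r * inner (K (s m) x) \<xi> = inner (K (s m) (r *\<^sub>R x)) \<xi>"
      using eventually_Sinf by eventually_elim (simp add: linear_scale[OF rep_linear])
    ultimately show "(\<lambda>m. inner (K (s m) (r *\<^sub>R x)) \<xi>) \<longlonglongrightarrow> inner (r *\<^sub>R B x) \<xi>"
      by (rule Lim_transform_eventually)
  qed
qed

lemma weak_limit_norm_le: "norm (B x) \<le> norm x"
proof -
  have "\<forall>\<^sub>F m in sequentially. inner (K (s m) x) (B x) \<le> norm x * norm (B x)"
    using eventually_Sinf by eventually_elim (metis norm_cauchy_schwarz norm_rep)
  with weak_limit_tendsto have "inner (B x) (B x) \<le> norm x * norm (B x)"
    by (rule tendsto_upperbound) simp
  then have "norm (B x) * norm (B x) \<le> norm x * norm (B x)"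
    by (simp add: power2_norm_eq_inner[symmetric] power2_eq_square)
  then show ?thesis
    by (cases "B x = 0") auto
qed

lemma weak_limit_bounded_linear: "bounded_linear B"
  by (rule bounded_linear_intro[where K = 1])
    (simp_all add: linear_add[OF weak_limit_linear] linear_scale[OF weak_limit_linear] weak_limit_norm_le)

lemma weak_limit_fixes:
  assumes "\<forall>\<^sub>F m in sequentially. K (s m) h = h"
  shows "B h = h"
proof (rule weak_op_limit_eqI[OF weak_limit])
  fix \<xi>
  have "\<forall>\<^sub>F m in sequentially. inner h \<xi> = inner (K (s m) h) \<xi>"
    using assms by eventually_elim simp
  then show "(\<lambda>m. inner (K (s m) h) \<xi>) \<longlonglongrightarrow> inner h \<xi>"
    by (rule Lim_transform_eventually[OF tendsto_const])
qed

lemma weak_limit_self_adjoint: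
  assumes "\<forall>\<^sub>F m in sequentially. s m \<circ> s m = id"
  shows "inner (B x) y = inner x (B y)"
proof -
  have "\<forall>\<^sub>F m in sequentially. inner (K (s m) y) x = inner (K (s m) x) y"
    using eventually_Sinf assms
    by eventually_elim (simp add: inner_rep_involution inner_commute[of x])
  with weak_limit_tendsto[of y x] have "(\<lambda>m. inner (K (s m) x) y) \<longlonglongrightarrow> inner (B y) x"
    by (rule Lim_transform_eventually)
  with weak_limit_tendsto[of x y] have "inner (B x) y = inner (B y) x"
    by (rule LIMSEQ_unique)
  then show ?thesis
    by (simp add: inner_commute)
qed

text \<open>K(t s_m) x = K(s_m) (K(u_m) x) is norm-close to K(s_m) x, so both sequences have the
  same weak limit; K t passes through the weak limit because it is self-adjoint.\<close>

lemma weak_limit_invariant: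
  assumes t: "t \<in> Sinf" "t \<circ> t = id"
    and conj: "\<forall>\<^sub>F m in sequentially. u m \<in> Sinf \<and> t \<circ> s m = s m \<circ> u m"
    and u: "(\<lambda>m. K (u m) x) \<longlonglongrightarrow> x"
  shows "K t (B x) = B x"
proof (rule sym, rule weak_op_limit_eqI[OF weak_limit])
  fix \<xi>
  have "\<forall>\<^sub>F m in sequentially. inner (K (s m) x) (K t \<xi>) = inner (K (s m) (K (u m) x)) \<xi>"
    using eventually_Sinf conj
  proof eventually_elim
    case (elim m)
    have "inner (K (s m) x) (K t \<xi>) = inner (K t (K (s m) x)) \<xi>"
      by (rule inner_rep_involution[OF t, symmetric])
    also have "K t (K (s m) x) = K (s m) (K (u m) x)"
      using elim t rep_comp[of t "s m" x] rep_comp[of "s m" "u m" x] by simp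
    finally show ?case .
  qed
  moreover have "(\<lambda>m. inner (K (s m) x) (K t \<xi>)) \<longlonglongrightarrow> inner (K t (B x)) \<xi>"
    using weak_limit_tendsto[of x "K t \<xi>"] by (simp add: inner_rep_involution[OF t])
  ultimately have "(\<lambda>m. inner (K (s m) (K (u m) x)) \<xi>) \<longlonglongrightarrow> inner (K t (B x)) \<xi>"
    by (rule Lim_transform_eventually[rotated])
  moreover have "(\<lambda>m. inner (K (s m) (K (u m) x) - K (s m) x) \<xi>) \<longlonglongrightarrow> 0"
  proof -
    have "\<forall>\<^sub>F m in sequentially. norm (K (u m) x - x) = norm (K (s m) (K (u m) x) - K (s m) x)"
      using eventually_Sinf by eventually_elim (simp add: linear_diff[OF rep_linear, symmetric])
    moreover have "(\<lambda>m. norm (K (u m) x - x)) \<longlonglongrightarrow> 0"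
      using u by (simp add: LIM_zero tendsto_norm_zero_iff)
    ultimately have "(\<lambda>m. norm (K (s m) (K (u m) x) - K (s m) x)) \<longlonglongrightarrow> 0"
      by (rule Lim_transform_eventually[rotated])
    then have "(\<lambda>m. K (s m) (K (u m) x) - K (s m) x) \<longlonglongrightarrow> 0"
      by (simp only: tendsto_norm_zero_iff)
    from tendsto_inner[OF this tendsto_const] show ?thesis
      by simp
  qed
  ultimately have "(\<lambda>m. inner (K (s m) (K (u m) x)) \<xi> - inner (K (s m) (K (u m) x) - K (s m) x) \<xi>)
      \<longlonglongrightarrow> inner (K t (B x)) \<xi> - 0"
    by (rule tendsto_diff)
  then show "(\<lambda>m. inner (K (s m) x) \<xi>) \<longlonglongrightarrow> inner (K t (B x)) \<xi>"
    by (simp add: inner_diff_left)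
qed

end

lemma norm_rep_diff_le_SUP:
  assumes "u \<in> Sfix M"
  shows "norm (K u w - w) \<le> (SUP s\<in>Sfix M. norm (K s w - w))"
proof (rule cSUP_upper[OF assms])
  have "norm (K s w - w) \<le> 2 * norm w" if "s \<in> Sfix M" for s
    using that norm_triangle_ineq4[of "K s w" w] by (simp add: Sfix_def)
  then show "bdd_above ((\<lambda>s. norm (K s w - w)) ` Sfix M)"
    by (intro bdd_aboveI[of _ "2 * norm w"]) auto
qed

text \<open>f is a product of transpositions of points outside F, built up one point of {0..M}
  at a time.\<close>

lemma stabilizer_approx_fixing:
  assumes F: "0 \<in> F" and s: "s \<in> stabilizer F"
    and fix_transpose: "\<And>i j. i \<notin> F \<Longrightarrow> j \<notin> F \<Longrightarrow> K (Transposition.transpose i j) w = w"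
  shows "\<exists>f\<in>stabilizer F. K f w = w \<and> (\<forall>j\<le>M. f j = s j)"
proof (induction M)
  case 0
  have "s 0 = 0"
    using s by (simp add: stabilizer_def Sinf_def)
  then have "K id w = w \<and> (\<forall>j\<le>0. id j = s j)"
    by simp
  with id_in_stabilizer show ?case
    by blast
next
  case (Suc M)
  then obtain f where f: "f \<in> stabilizer F" "K f w = w" "\<forall>j\<le>M. f j = s j"
    by blast
  define t where "t = Transposition.transpose (f (Suc M)) (s (Suc M))"
  have t: "t \<in> stabilizer F \<and> K t w = w"
    using stabilizer_apply_cases[OF f(1) s, of "Suc M"] F
    by (auto simp: t_def id_in_stabilizer transpose_in_stabilizer fix_transpose)
  have "t \<in> Sinf" and "f \<in> Sinf" and "inj f" and "inj s"
    using t f(1) s stabilizer_subset_Sinf by (auto simp: stabilizer_def Sinf_def bij_is_inj)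
  have "t \<circ> f \<in> stabilizer F"
    using t f(1) by (simp add: stabilizer_comp)
  moreover have "K (t \<circ> f) w = w"
    using t f(2) \<open>t \<in> Sinf\<close> \<open>f \<in> Sinf\<close> by (simp add: rep_comp)
  moreover have "\<forall>j\<in>insert (Suc M) {..M}. (t \<circ> f) j = s j"
    unfolding t_def using \<open>inj f\<close> \<open>inj s\<close> f(3) by (intro transpose_comp_agree) auto
  then have "\<forall>j\<le>Suc M. (t \<circ> f) j = s j"
    by (simp add: atMost_Suc[symmetric])
  ultimately show ?case
    by blast
qed

lemma stabilizer_norm_diff_le_SUP:
  assumes F: "0 \<in> F" and s: "s \<in> stabilizer F"
    and fix_transpose: "\<And>i j. i \<notin> F \<Longrightarrow> j \<notin> F \<Longrightarrow> K (Transposition.transpose i j) w = w"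
  shows "norm (K s w - w) \<le> (SUP u\<in>Sfix M. norm (K u w - w))"
proof -
  obtain f where f: "f \<in> stabilizer F" "K f w = w" "\<forall>j\<le>M. f j = s j"
    using stabilizer_approx_fixing[OF F s fix_transpose] by blast
  define u where "u = inv f \<circ> s"
  have f_Sinf: "f \<in> Sinf" and "bij f"
    using f(1) stabilizer_subset_Sinf by (auto simp: Sinf_def)
  have u_Sinf: "u \<in> Sinf"
    using stabilizer_comp[OF stabilizer_inv[OF f(1)] s] stabilizer_subset_Sinf by (auto simp: u_def)
  have "u j = j" if "j \<le> M" for j
    using f(3) that \<open>bij f\<close> by (metis u_def comp_apply bij_is_inj inv_f_f)
  then have "u \<in> Sfix M"
    using u_Sinf by (simp add: Sfix_def)
  have "s = f \<circ> u"
    using \<open>bij f\<close> by (simp add: u_def fun_eq_iff bij_is_surj surj_f_inv_f)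
  then have "K s w - w = K f (K u w - w)"
    using f(2) f_Sinf u_Sinf by (simp add: rep_comp linear_diff[OF rep_linear])
  then have "norm (K s w - w) = norm (K u w - w)"
    using f_Sinf by simp
  also have "\<dots> \<le> (SUP u\<in>Sfix M. norm (K u w - w))"
    using \<open>u \<in> Sfix M\<close> by (rule norm_rep_diff_le_SUP)
  finally show ?thesis .
qed

end

locale continuous_unitary_representation = unitary_representation +
  assumes continuous: "continuous_rep K"
begin

lemma rep_tendsto_self:
  assumes "\<forall>\<^sub>F m in sequentially. u m \<in> Sfix m"
  shows "(\<lambda>m. K (u m) x) \<longlonglongrightarrow> x"
proof -
  have "\<forall>\<^sub>F m in sequentially. norm (K (u m) x - x) \<le> (SUP s\<in>Sfix m. norm (K s x - x))"
    using assms by eventually_elim (rule norm_rep_diff_le_SUP)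
  moreover have "(\<lambda>m. SUP s\<in>Sfix m. norm (K s x - x)) \<longlonglongrightarrow> 0"
    using continuous by (simp add: continuous_rep_def)
  ultimately have "(\<lambda>m. K (u m) x - x) \<longlonglongrightarrow> 0"
    by (rule Lim_null_comparison)
  then show ?thesis
    by (simp add: LIM_zero_cancel)
qed

lemma fixed_vectors_stabilizerI:
  assumes F: "0 \<in> F"
    and fix_transpose: "\<And>i j. i \<notin> F \<Longrightarrow> j \<notin> F \<Longrightarrow> K (Transposition.transpose i j) w = w"
  shows "w \<in> fixed_vectors K (stabilizer F)"
  unfolding fixed_vectors_def
proof (intro CollectI ballI)
  fix s
  assume s: "s \<in> stabilizer F"
  have "(\<lambda>M. SUP u\<in>Sfix M. norm (K u w - w)) \<longlonglongrightarrow> 0"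
    using continuous by (simp add: continuous_rep_def)
  then have "norm (K s w - w) \<le> 0"
    using stabilizer_norm_diff_le_SUP[OF F s fix_transpose] by (intro LIMSEQ_le_const) auto
  then show "K s w = w"
    by simp
qed

end


section \<open>Orthogonal projections\<close>

lemma sa_projection_ontoI:
  assumes "bounded_linear Q" and "\<And>x y. inner (Q x) y = inner x (Q y)"
    and fixed: "\<And>v. v \<in> V \<Longrightarrow> Q v = v" and into: "\<And>x. Q x \<in> V"
  shows "sa_projection_onto Q V"
  unfolding sa_projection_onto_def
proof (intro conjI allI)
  show "Q \<circ> Q = Q"
    using fixed into by auto
  show "range Q = V"
  proof (intro equalityI subsetI)
    show "v \<in> range Q" if "v \<in> V" for v
      using fixed[OF that] by (metis rangeI)
  qed (use into in auto)
qed (use assms in auto)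

lemma sa_projection_onto_self_adjoint: "sa_projection_onto Q V \<Longrightarrow> inner (Q x) y = inner x (Q y)"
  by (simp add: sa_projection_onto_def)

lemma sa_projection_onto_range: "sa_projection_onto Q V \<Longrightarrow> Q x \<in> V"
  by (auto simp: sa_projection_onto_def)

lemma sa_projection_onto_fixes:
  assumes "sa_projection_onto Q V" and "v \<in> V"
  shows "Q v = v"
proof -
  obtain x where "v = Q x"
    using assms by (auto simp: sa_projection_onto_def)
  moreover have "Q (Q x) = Q x"
    using assms(1) by (simp add: sa_projection_onto_def fun_eq_iff)
  ultimately show ?thesis
    by simp
qed

lemma sa_projection_onto_unique:
  assumes Q: "sa_projection_onto Q V" and Q': "sa_projection_onto Q' V"
  shows "Q = Q'"
proof
  fix x
  have "inner (Q x) y = inner (Q' x) y" for y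
  proof -
    have "inner (Q x) y = inner x (Q y)"
      using Q by (rule sa_projection_onto_self_adjoint)
    also have "Q y = Q' (Q y)"
      using Q' Q by (simp add: sa_projection_onto_fixes sa_projection_onto_range)
    also have "inner x (Q' (Q y)) = inner (Q' x) (Q y)"
      using Q' by (simp add: sa_projection_onto_self_adjoint[symmetric])
    also have "\<dots> = inner (Q (Q' x)) y"
      using Q by (simp add: sa_projection_onto_self_adjoint[symmetric])
    also have "Q (Q' x) = Q' x"
      using Q Q' by (simp add: sa_projection_onto_fixes sa_projection_onto_range)
    finally show ?thesis .
  qed
  then show "Q x = Q' x"
    using vector_eq_rdot by blast
qed

lemma sa_projection_onto_comp:
  assumes P: "sa_projection_onto P V"
    and B: "bounded_linear B" "\<And>x y. inner (B x) y = inner x (B y)"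
    and W: "W \<subseteq> V" "\<And>w. w \<in> W \<Longrightarrow> B w = w" "\<And>v. v \<in> V \<Longrightarrow> B v \<in> W"
  shows "sa_projection_onto (B \<circ> P) W"
proof (rule sa_projection_ontoI)
  have absorb: "inner w y = inner w (B (P y))" if "w \<in> W" for w y
  proof -
    have "inner w (B (P y)) = inner (B w) (P y)"
      by (simp add: B(2))
    also have "\<dots> = inner w (P y)"
      using that W(2) by simp
    also have "\<dots> = inner (P w) y"
      using P by (simp add: sa_projection_onto_self_adjoint[of P V w y])
    also have "\<dots> = inner w y"
      using that W(1) P by (auto simp: sa_projection_onto_fixes)
    finally show ?thesis
      by simp
  qed
  have range: "(B \<circ> P) x \<in> W" for x
    using W(3) P by (simp add: sa_projection_onto_range)
  show "inner ((B \<circ> P) x) y = inner x ((B \<circ> P) y)" for x y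
  proof -
    have "inner ((B \<circ> P) x) y = inner ((B \<circ> P) y) ((B \<circ> P) x)"
      using absorb[OF range[of x], of y] by (simp add: inner_commute)
    also have "\<dots> = inner x ((B \<circ> P) y)"
      using absorb[OF range[of y], of x] by (simp add: inner_commute)
    finally show ?thesis .
  qed
  show "bounded_linear (B \<circ> P)"
    using bounded_linear_compose[OF B(1), of P] P by (simp add: sa_projection_onto_def comp_def)
  show "(B \<circ> P) w = w" if "w \<in> W" for w
    using that W P by (auto simp: sa_projection_onto_fixes)
  show "(B \<circ> P) x \<in> W" for x
    by (rule range)
qed

section \<open>The projections P_n and O_k P_n\<close>

context continuous_unitary_representation
begin

lemma sigma_weak_limit_invariant:
  assumes P: "weak_op_limit (\<lambda>m. K (sigma n m)) P" and "n < i" and "n < j"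
  shows "K (Transposition.transpose i j) (P x) = P x"
proof -
  let ?u = "\<lambda>m. Transposition.transpose (i + m) (j + m)"
  have Sinf: "\<forall>\<^sub>F m in sequentially. sigma n m \<in> Sinf"
    by (simp add: sigma_in_Sinf)
  have t: "Transposition.transpose i j \<in> Sinf"
    using assms by (simp add: transpose_in_Sinf)
  have "\<forall>\<^sub>F m in sequentially. ?u m \<in> Sinf \<and>
      Transposition.transpose i j \<circ> sigma n m = sigma n m \<circ> ?u m"
    using eventually_ge_at_top[of "max i j"]
  proof eventually_elim
    case (elim m)
    then show ?case
      using assms transpose_comp_sigma[of n i m j] by (simp add: transpose_in_Sinf)
  qed
  moreover have "\<forall>\<^sub>F m in sequentially. ?u m \<in> Sfix m"
    using assms by (intro always_eventually allI) (simp add: Sfix_eq_stabilizer transpose_in_stabilizer)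
  then have "(\<lambda>m. K (?u m) x) \<longlonglongrightarrow> x"
    by (rule rep_tendsto_self)
  ultimately show ?thesis
    by (rule weak_limit_invariant[OF P Sinf t transpose_comp_involutory])
qed

lemma sigma_weak_limit_projection:
  assumes P: "weak_op_limit (\<lambda>m. K (sigma n m)) P"
  shows "sa_projection_onto P (fixed_vectors K (stabilizer {0..n}))"
proof (rule sa_projection_ontoI)
  have Sinf: "\<forall>\<^sub>F m in sequentially. sigma n m \<in> Sinf"
    by (simp add: sigma_in_Sinf)
  show "bounded_linear P"
    using P Sinf by (rule weak_limit_bounded_linear)
  show "inner (P x) y = inner x (P y)" for x y
    using P Sinf by (rule weak_limit_self_adjoint) (simp add: sigma_involution)
  show "P v = v" if "v \<in> fixed_vectors K (stabilizer {0..n})" for v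
    using P Sinf
  proof (rule weak_limit_fixes)
    show "\<forall>\<^sub>F m in sequentially. K (sigma n m) v = v"
      using that sigma_in_stabilizer by (intro always_eventually) (simp add: fixed_vectors_def)
  qed
  show "P x \<in> fixed_vectors K (stabilizer {0..n})" for x
    using P by (intro fixed_vectors_stabilizerI sigma_weak_limit_invariant) auto
qed

lemma transpose_weak_limit_fixes:
  assumes "k \<ge> 1" and Ok: "weak_op_limit (\<lambda>N. K (Transposition.transpose k N)) Ok"
    and v: "v \<in> fixed_vectors K (stabilizer ({0..n} - {k}))"
  shows "Ok v = v"
  using Ok eventually_transpose_in_Sinf
proof (rule weak_limit_fixes)
  show "\<forall>\<^sub>F N in sequentially. K (Transposition.transpose k N) v = v"
    using eventually_gt_at_top[of n]
  proof eventually_elim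
    case (elim N)
    then have "Transposition.transpose k N \<in> stabilizer ({0..n} - {k})"
      using assms(1) by (intro transpose_in_stabilizer) auto
    then show ?case
      using v by (simp add: fixed_vectors_def)
  qed
qed (use assms in simp)

text \<open>Conjugating (i j) by (k N) gives a transposition of two points beyond n once N is large,
  and such a transposition already fixes h.\<close>

lemma transpose_weak_limit_maps_into:
  assumes k: "k \<ge> 1" and Ok: "weak_op_limit (\<lambda>N. K (Transposition.transpose k N)) Ok"
    and h: "h \<in> fixed_vectors K (stabilizer {0..n})"
  shows "Ok h \<in> fixed_vectors K (stabilizer ({0..n} - {k}))"
proof (rule fixed_vectors_stabilizerI)
  fix i j
  assume i: "i \<notin> {0..n} - {k}" and j: "j \<notin> {0..n} - {k}"
  define u where "u N = Transposition.transpose (Transposition.transpose k N i) (Transposition.transpose k N j)" for N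
  have u: "u N \<in> stabilizer {0..n}" if "N > max n (max i j)" for N
  proof -
    have "Transposition.transpose k N x \<notin> {0..n}" if "x \<notin> {0..n} - {k}" "x < N" for x
      using that \<open>N > max n (max i j)\<close> by (auto simp: Transposition.transpose_def)
    then show ?thesis
      using that i j by (simp add: u_def transpose_in_stabilizer)
  qed
  have Sinf: "\<forall>\<^sub>F N in sequentially. Transposition.transpose k N \<in> Sinf"
    using k by (simp add: eventually_transpose_in_Sinf)
  have t: "Transposition.transpose i j \<in> Sinf"
    using i j k by (intro transpose_in_Sinf) auto
  have conj: "\<forall>\<^sub>F N in sequentially. u N \<in> Sinf \<and>
      Transposition.transpose i j \<circ> Transposition.transpose k N = Transposition.transpose k N \<circ> u N"
    using eventually_gt_at_top[of "max n (max i j)"]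
    by eventually_elim (use u stabilizer_subset_Sinf transpose_comp_transpose[of i j k] in \<open>auto simp: u_def\<close>)
  have "\<forall>\<^sub>F N in sequentially. K (u N) h = h"
    using eventually_gt_at_top[of "max n (max i j)"]
    by eventually_elim (use u h in \<open>simp add: fixed_vectors_def\<close>)
  then have "(\<lambda>N. K (u N) h) \<longlonglongrightarrow> h"
    by (rule tendsto_eventually)
  then show "K (Transposition.transpose i j) (Ok h) = Ok h"
    by (rule weak_limit_invariant[OF Ok Sinf t transpose_comp_involutory conj])
qed (use k in simp)

lemma transpose_weak_limit_comp_projection:
  assumes k: "k \<ge> 1" and P: "weak_op_limit (\<lambda>m. K (sigma n m)) P"
    and Ok: "weak_op_limit (\<lambda>N. K (Transposition.transpose k N)) Ok"
  shows "sa_projection_onto (Ok \<circ> P) (fixed_vectors K (stabilizer ({0..n} - {k})))"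
proof (rule sa_projection_onto_comp[OF sigma_weak_limit_projection[OF P]])
  have Sinf: "\<forall>\<^sub>F N in sequentially. Transposition.transpose k N \<in> Sinf"
    using k by (simp add: eventually_transpose_in_Sinf)
  show "bounded_linear Ok"
    using Ok Sinf by (rule weak_limit_bounded_linear)
  show "inner (Ok x) y = inner x (Ok y)" for x y
    using Ok Sinf by (rule weak_limit_self_adjoint) simp
  show "fixed_vectors K (stabilizer ({0..n} - {k})) \<subseteq> fixed_vectors K (stabilizer {0..n})"
    by (intro fixed_vectors_antimono stabilizer_antimono) auto
  show "Ok v = v" if "v \<in> fixed_vectors K (stabilizer ({0..n} - {k}))" for v
    using k Ok that by (rule transpose_weak_limit_fixes)
  show "Ok h \<in> fixed_vectors K (stabilizer ({0..n} - {k}))"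
    if "h \<in> fixed_vectors K (stabilizer {0..n})" for h
    using k Ok that by (rule transpose_weak_limit_maps_into)
qed

end

theorem lemma6:
  fixes K :: "(nat \<Rightarrow> nat) \<Rightarrow> 'a::{real_inner,complete_space} \<Rightarrow> 'a"
    and n k :: nat and P P' Ok :: "'a \<Rightarrow> 'a"
  assumes "unitary_rep K" and "continuous_rep K"
    and "n \<ge> 1" and "k \<ge> 1"
    and "weak_op_limit (\<lambda>m. K (sigma n m)) P"
    and "weak_op_limit (\<lambda>N. K (Transposition.transpose k N)) Ok"
    and "weak_op_limit (\<lambda>m. K (sigma (n - 1) m)) P'"
  shows "sa_projection_onto (Ok \<circ> P) {\<eta>. \<forall>s\<in>Sfix2 k n. K s \<eta> = \<eta>}
         \<and> (k = n \<longrightarrow> Ok \<circ> P = P')"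
proof -
  interpret continuous_unitary_representation K
    using assms(1,2) by (simp add: continuous_unitary_representation_def unitary_representation_def
        continuous_unitary_representation_axioms_def)
  have proj: "sa_projection_onto (Ok \<circ> P) (fixed_vectors K (stabilizer ({0..n} - {k})))"
    using assms(4-6) by (rule transpose_weak_limit_comp_projection)
  moreover have "{\<eta>. \<forall>s\<in>Sfix2 k n. K s \<eta> = \<eta>} = fixed_vectors K (stabilizer ({0..n} - {k}))"
    using assms(4) by (simp add: fixed_vectors_def Sfix2_eq_stabilizer)
  moreover have "Ok \<circ> P = P'" if "k = n"
  proof -
    have "{0..n} - {k} = {0..n - 1}"
      using that assms(3) by auto
    with sigma_weak_limit_projection[OF assms(7)]
    have "sa_projection_onto P' (fixed_vectors K (stabilizer ({0..n} - {k})))"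
      by simp
    with proj show ?thesis
      by (rule sa_projection_onto_unique)
  qed
  ultimately show ?thesis
    by simp
qed

end
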